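(* Every vector configuration $V$ has a subconfiguration $W$ with $\operatorname{rank}(W)\le 2\,\mathrm{DD}(V)$, $\mathrm{DD}(W)=\mathrm{DD}(V)$ and $\mathrm{DD}(V\setminus W)=0$.
   Context: A vector configuration is a finite family (repetitions allowed) $V$ of vectors in $\mathbb{R}^r$; a subconfiguration is a subfamily, $V\setminus W$ is the complementary subfamily, $\operatorname{rank}(W)=\dim\operatorname{lin}(W)$, and cardinalities count multiplicities. The covector discrepancy is $\mathrm{DD}(W)=\max_f\big|\,|\{w\in W: f(w)>0\}|-|\{w\in W:f(w)<0\}|\,\big|$, the maximum over all linear functionals $f$ on $\mathbb{R}^r$. *)

theory Defs
  imports "HOL-Analysis.Analysis"
begin

text \<open>A vector configuration is a finite family, modelled as a map V from a finite
index set I (repetitions allowed) into a Euclidean space; a subconfiguration is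
the restriction to a subset J of I, and the complementary subconfiguration is I - J.\<close>

definition pos_count :: "('i \<Rightarrow> 'a::euclidean_space) \<Rightarrow> 'i set \<Rightarrow> ('a \<Rightarrow> real) \<Rightarrow> nat" where
  "pos_count V J f = card {j \<in> J. f (V j) > 0}"

definition neg_count :: "('i \<Rightarrow> 'a::euclidean_space) \<Rightarrow> 'i set \<Rightarrow> ('a \<Rightarrow> real) \<Rightarrow> nat" where
  "neg_count V J f = card {j \<in> J. f (V j) < 0}"

definition DD :: "('i \<Rightarrow> 'a::euclidean_space) \<Rightarrow> 'i set \<Rightarrow> nat" where
  "DD V J = Max {nat \<bar>int (pos_count V J f) - int (neg_count V J f)\<bar> | f. linear f}"

definition rank_conf :: "('i \<Rightarrow> 'a::euclidean_space) \<Rightarrow> 'i set \<Rightarrow> nat" where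
  "rank_conf V J = dim (span (V ` J))"

end

theory Submission
  imports Defs
begin

text \<open>Zero vectors, and pairs \<open>u, v\<close> with \<open>u + c v = 0\<close> for some \<open>c > 0\<close>, contribute nothing to
  the signed count \<open>#{f > 0} - #{f < 0}\<close> of any functional \<open>f\<close>. Deleting them until none are left
  yields \<open>W\<close> with \<open>DD(W) = DD(V)\<close> and \<open>DD(V \<setminus> W) = 0\<close>; it remains to show
  \<open>rank W \<le> 2 DD(W)\<close> for such antipodal-free \<open>W\<close>, by induction on the rank.

  For the induction step one finds functionals \<open>h\<^sub>1, h\<^sub>2\<close> such that \<open>h\<^sub>2\<close> has nonzero signed
  count on the hyperplane section \<open>{h\<^sub>1 = 0}\<close>, while the face \<open>{h\<^sub>1 = h\<^sub>2 = 0}\<close> has rank at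
  least \<open>rank W - 2\<close>. Perturbing \<open>h\<^sub>1\<close> lexicographically by \<open>h\<^sub>2\<close> and by an optimal functional of the
  face shows \<open>DD(W) \<ge> 1 + DD(face)\<close>. Such a pair \<open>h\<^sub>1, h\<^sub>2\<close> is built by induction over hyperplane
  sections: modulo the span \<open>B\<close> of a subconfiguration of corank 3, the Sylvester--Gallai
  theorem (in Kelly's form) yields an ordinary line, that is vectors \<open>a, b\<close> such that every other
  vector of \<open>span (B \<union> {a, b})\<close> lies in \<open>span (B \<union> {a})\<close> or is a positive multiple of \<open>b\<close> modulo
  \<open>B\<close>; choosing \<open>h\<^sub>1, h\<^sub>2\<close> with these two spans as zero sets makes \<open>h\<^sub>2\<close> of
  constant sign on the vectors left in \<open>{h\<^sub>1 = 0}\<close> after cancelling opposite pairs modulo \<open>B\<close>.\<close>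

section \<open>Signed counts of functionals\<close>

definition discrepancy :: "('i \<Rightarrow> 'a::euclidean_space) \<Rightarrow> 'i set \<Rightarrow> ('a \<Rightarrow> real) \<Rightarrow> int" where
  "discrepancy V J f = int (pos_count V J f) - int (neg_count V J f)"

lemma discrepancy_empty [simp]: "discrepancy V {} f = 0"
  by (simp add: discrepancy_def pos_count_def neg_count_def)

lemma discrepancy_uminus: "discrepancy V J (\<lambda>x. - f x) = - discrepancy V J f"
  by (simp add: discrepancy_def pos_count_def neg_count_def)

lemma discrepancy_Un_disjoint:
  assumes "finite A" "finite B" "A \<inter> B = {}"
  shows "discrepancy V (A \<union> B) f = discrepancy V A f + discrepancy V B f"
proof -
  have "{j \<in> A \<union> B. f (V j) > 0} = {j \<in> A. f (V j) > 0} \<union> {j \<in> B. f (V j) > 0}"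
    and "{j \<in> A \<union> B. f (V j) < 0} = {j \<in> A. f (V j) < 0} \<union> {j \<in> B. f (V j) < 0}"
    by auto
  then show ?thesis
    unfolding discrepancy_def pos_count_def neg_count_def
    using assms by (simp add: card_Un_disjoint disjoint_iff)
qed

lemma discrepancy_split:
  assumes "finite J"
  shows "discrepancy V J f = discrepancy V {j \<in> J. P j} f + discrepancy V {j \<in> J. \<not> P j} f"
proof -
  have "J = {j \<in> J. P j} \<union> {j \<in> J. \<not> P j}" by auto
  then have "discrepancy V J f = discrepancy V ({j \<in> J. P j} \<union> {j \<in> J. \<not> P j}) f" by simp
  also have "\<dots> = discrepancy V {j \<in> J. P j} f + discrepancy V {j \<in> J. \<not> P j} f"
    using assms by (intro discrepancy_Un_disjoint) auto
  finally show ?thesis .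
qed

lemma discrepancy_cong_sgn:
  assumes "\<And>j. j \<in> J \<Longrightarrow> sgn (f (V j)) = sgn (g (V j))"
  shows "discrepancy V J f = discrepancy V J g"
proof -
  have pos: "\<And>x::real. (x > 0) = (sgn x = 1)" and neg: "\<And>x::real. (x < 0) = (sgn x = -1)"
    by (auto simp: sgn_real_def)
  have "{j \<in> J. f (V j) > 0} = {j \<in> J. g (V j) > 0}" "{j \<in> J. f (V j) < 0} = {j \<in> J. g (V j) < 0}"
    unfolding pos neg using assms by auto
  then show ?thesis by (simp add: discrepancy_def pos_count_def neg_count_def)
qed

lemma discrepancy_eq_0_if_vanishing:
  assumes "\<And>j. j \<in> J \<Longrightarrow> f (V j) = 0"
  shows "discrepancy V J f = 0"
proof -
  have e: "{j \<in> J. f (V j) > 0} = {}" "{j \<in> J. f (V j) < 0} = {}" using assms by auto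
  show ?thesis unfolding discrepancy_def pos_count_def neg_count_def by (simp add: e)
qed

lemma discrepancy_restrict_nonzero:
  assumes "finite J"
  shows "discrepancy V J f = discrepancy V {j \<in> J. f (V j) \<noteq> 0} f"
  using discrepancy_split[OF assms, of V f "\<lambda>j. f (V j) \<noteq> 0"]
    discrepancy_eq_0_if_vanishing[of "{j \<in> J. \<not> f (V j) \<noteq> 0}" f V]
  by simp

lemma discrepancy_singleton:
  "discrepancy V {a} f = (if f (V a) > 0 then 1 else if f (V a) < 0 then -1 else 0)"
proof -
  have "{j \<in> {a}. f (V j) > 0} = (if f (V a) > 0 then {a} else {})"
    and "{j \<in> {a}. f (V j) < 0} = (if f (V a) < 0 then {a} else {})"
    by auto
  then show ?thesis by (simp add: discrepancy_def pos_count_def neg_count_def)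
qed

lemma discrepancy_nonzero_if_same_sign:
  assumes "finite M" "m \<in> M" and sign: "\<And>j. j \<in> M \<Longrightarrow> 0 < c * f (V j)"
  shows "discrepancy V M f \<noteq> 0"
proof -
  have "card M > 0" using assms(1,2) card_gt_0_iff by blast
  have "c \<noteq> 0" using sign[OF assms(2)] by auto
  then consider "c > 0" | "c < 0" by linarith
  then show ?thesis
  proof cases
    case 1
    then have "f (V j) > 0" if "j \<in> M" for j using sign[OF that] by (simp add: zero_less_mult_iff)
    then have e: "{j \<in> M. f (V j) > 0} = M" "{j \<in> M. f (V j) < 0} = {}" by force+
    show ?thesis
      unfolding discrepancy_def pos_count_def neg_count_def using \<open>card M > 0\<close> by (simp add: e)
  next
    case 2
    then have "f (V j) < 0" if "j \<in> M" for j using sign[OF that] by (simp add: zero_less_mult_iff)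
    then have e: "{j \<in> M. f (V j) < 0} = M" "{j \<in> M. f (V j) > 0} = {}" by force+
    show ?thesis
      unfolding discrepancy_def pos_count_def neg_count_def using \<open>card M > 0\<close> by (simp add: e)
  qed
qed

lemma abs_discrepancy_le_card:
  assumes "finite J"
  shows "\<bar>discrepancy V J f\<bar> \<le> int (card J)"
proof -
  have "pos_count V J f + neg_count V J f = card ({j \<in> J. f (V j) > 0} \<union> {j \<in> J. f (V j) < 0})"
    unfolding pos_count_def neg_count_def using assms by (subst card_Un_disjoint) auto
  also have "\<dots> \<le> card J" using assms by (intro card_mono) auto
  finally show ?thesis unfolding discrepancy_def by linarith
qed

lemma DD_eq_Max_discrepancy: "DD V J = Max {nat \<bar>discrepancy V J f\<bar> | f. linear f}"
  unfolding DD_def discrepancy_def by simp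

lemma finite_discrepancy_values:
  assumes "finite J"
  shows "finite {nat \<bar>discrepancy V J f\<bar> | f. linear f}"
  by (rule finite_subset[of _ "{0..card J}"])
    (use abs_discrepancy_le_card[OF assms] in \<open>auto simp: nat_le_iff\<close>)

lemma discrepancy_le_DD:
  assumes "finite J" "linear f"
  shows "nat \<bar>discrepancy V J f\<bar> \<le> DD V J"
  unfolding DD_eq_Max_discrepancy using assms finite_discrepancy_values[OF assms(1)]
  by (intro Max_ge) auto

lemma DD_attained:
  assumes "finite J"
  obtains f where "linear f" "DD V J = nat \<bar>discrepancy V J f\<bar>"
proof -
  have "DD V J \<in> {nat \<bar>discrepancy V J f\<bar> | f. linear f}"
    unfolding DD_eq_Max_discrepancy using finite_discrepancy_values[OF assms]
    by (intro Max_in) (auto intro!: exI[of _ "\<lambda>x. 0"] simp: linear_zero)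
  then show ?thesis using that by auto
qed

lemma DD_eq_0_if_balanced:
  assumes "finite J" "\<And>f. linear f \<Longrightarrow> discrepancy V J f = 0"
  shows "DD V J = 0"
proof -
  obtain f where "linear f" "DD V J = nat \<bar>discrepancy V J f\<bar>" using DD_attained[OF assms(1)] .
  then show ?thesis using assms(2) by simp
qed

lemma DD_cong:
  assumes "\<And>f. linear f \<Longrightarrow> discrepancy V I f = discrepancy V J f"
  shows "DD V I = DD V J"
proof -
  have "{nat \<bar>discrepancy V I f\<bar> | f. linear f} = {nat \<bar>discrepancy V J f\<bar> | f. linear f}"
    using assms by metis
  then show ?thesis by (simp add: DD_eq_Max_discrepancy)
qed

lemma linear_add_mult:
  fixes f g :: "'a::real_vector \<Rightarrow> real"
  shows "linear f \<Longrightarrow> linear g \<Longrightarrow> linear (\<lambda>x. f x + c * g x)"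
  by (simp add: linear_compose_add linear_compose_scale_right[of g c, simplified])

lemma exists_small_perturbation:
  fixes a b :: "'j \<Rightarrow> real"
  assumes "finite A"
  obtains \<epsilon> where "\<epsilon> > 0" "\<And>j. j \<in> A \<Longrightarrow> a j \<noteq> 0 \<Longrightarrow> \<epsilon> * \<bar>b j\<bar> < \<bar>a j\<bar>"
proof -
  define S where "S = insert 1 ((\<lambda>j. \<bar>a j\<bar> / (\<bar>b j\<bar> + 1)) ` {j \<in> A. a j \<noteq> 0})"
  have "finite S" "\<forall>s\<in>S. s > 0" using assms by (auto simp: S_def)
  then have pos: "Min S > 0" by (simp add: S_def)
  have "Min S * \<bar>b j\<bar> < \<bar>a j\<bar>" if "j \<in> A" "a j \<noteq> 0" for j
  proof -
    have "Min S \<le> \<bar>a j\<bar> / (\<bar>b j\<bar> + 1)"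
      using \<open>finite S\<close> that by (intro Min_le) (auto simp: S_def)
    then have "Min S * (\<bar>b j\<bar> + 1) \<le> \<bar>a j\<bar>"
      by (simp add: pos_le_divide_eq add_pos_nonneg)
    then show ?thesis using pos by (simp add: algebra_simps)
  qed
  then show ?thesis using that pos by blast
qed

text \<open>Perturbing \<open>h\<close> by a small multiple of \<open>g\<close> keeps every nonzero sign of \<open>h\<close> and lets
  \<open>g\<close> decide the signs on the zero set of \<open>h\<close>.\<close>

lemma discrepancy_perturb:
  assumes "finite J"
  obtains \<epsilon> where "\<epsilon> > 0"
    "discrepancy V J (\<lambda>x. h x + \<epsilon> * g x) = discrepancy V J h + discrepancy V {j \<in> J. h (V j) = 0} g"
proof -
  obtain \<epsilon> where \<epsilon>: "\<epsilon> > 0" and small: "\<And>j. j \<in> J \<Longrightarrow> h (V j) \<noteq> 0 \<Longrightarrow> \<epsilon> * \<bar>g (V j)\<bar> < \<bar>h (V j)\<bar>"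
    using exists_small_perturbation[OF assms, of "\<lambda>j. h (V j)" "\<lambda>j. g (V j)"] by blast
  let ?f = "\<lambda>x. h x + \<epsilon> * g x"
  have "discrepancy V {j \<in> J. h (V j) \<noteq> 0} ?f = discrepancy V {j \<in> J. h (V j) \<noteq> 0} h"
  proof (rule discrepancy_cong_sgn)
    fix j assume "j \<in> {j \<in> J. h (V j) \<noteq> 0}"
    then have "\<bar>\<epsilon> * g (V j)\<bar> < \<bar>h (V j)\<bar>" using small \<epsilon> by (simp add: abs_mult)
    then show "sgn (?f (V j)) = sgn (h (V j))" by (auto simp: sgn_real_def)
  qed
  also have "\<dots> = discrepancy V J h"
    by (rule discrepancy_restrict_nonzero[OF assms, symmetric])
  moreover have "discrepancy V {j \<in> J. \<not> h (V j) \<noteq> 0} ?f = discrepancy V {j \<in> J. h (V j) = 0} g"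
    using \<epsilon> by (auto intro: discrepancy_cong_sgn simp: sgn_mult)
  ultimately show ?thesis
    using that \<epsilon> discrepancy_split[OF assms, of V ?f "\<lambda>j. h (V j) \<noteq> 0"] by simp
qed

text \<open>Perturb \<open>h\<close> by a functional attaining \<open>DD\<close> on the zero set of \<open>h\<close>, both signs chosen
  positive.\<close>

lemma discrepancy_plus_DD_zero_set_le_DD:
  fixes V :: "'i \<Rightarrow> 'a::euclidean_space"
  assumes "finite J" "linear h"
  shows "nat \<bar>discrepancy V J h\<bar> + DD V {j \<in> J. h (V j) = 0} \<le> DD V J"
proof -
  let ?Z = "{j \<in> J. h (V j) = 0}"
  have flip: "\<exists>f'. linear f' \<and> discrepancy V K f' = \<bar>discrepancy V K f\<bar> \<and> (\<forall>x. f' x = 0 \<longleftrightarrow> f x = 0)"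
    if "linear f" for f :: "'a \<Rightarrow> real" and K
  proof (cases "discrepancy V K f \<ge> 0")
    case True
    then show ?thesis using that by (intro exI[of _ f]) simp
  next
    case False
    then show ?thesis using linear_compose_neg[OF that] discrepancy_uminus[of V K f]
      by (intro exI[of _ "\<lambda>x. - f x"]) simp
  qed
  have "finite ?Z" using assms(1) by simp
  then obtain g where g: "linear g" "DD V ?Z = nat \<bar>discrepancy V ?Z g\<bar>"
    using DD_attained by blast
  obtain h' where h': "linear h'" "discrepancy V J h' = \<bar>discrepancy V J h\<bar>" "\<And>x. h' x = 0 \<longleftrightarrow> h x = 0"
    using flip[OF assms(2)] by blast
  obtain g' where g': "linear g'" "discrepancy V ?Z g' = \<bar>discrepancy V ?Z g\<bar>"
    using flip[OF g(1)] by blast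
  obtain \<epsilon> where \<epsilon>: "discrepancy V J (\<lambda>x. h' x + \<epsilon> * g' x)
      = discrepancy V J h' + discrepancy V {j \<in> J. h' (V j) = 0} g'"
    using discrepancy_perturb[OF assms(1)] by blast
  have "{j \<in> J. h' (V j) = 0} = ?Z" using h'(3) by simp
  then have "nat \<bar>discrepancy V J h\<bar> + DD V ?Z = nat (discrepancy V J (\<lambda>x. h' x + \<epsilon> * g' x))"
    using \<epsilon> h'(2) g'(2) g(2) by (simp add: nat_add_distrib)
  also have "\<dots> \<le> nat \<bar>discrepancy V J (\<lambda>x. h' x + \<epsilon> * g' x)\<bar>" by simp
  also have "\<dots> \<le> DD V J"
    by (rule discrepancy_le_DD[OF assms(1) linear_add_mult[OF h'(1) g'(1)]])
  finally show ?thesis .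
qed

section \<open>Functionals and projections with prescribed kernel\<close>

lemma exists_functional_separating:
  fixes B :: "'a::euclidean_space set"
  assumes "x \<notin> span B"
  obtains g :: "'a \<Rightarrow> real" where "linear g" "\<And>b. b \<in> span B \<Longrightarrow> g b = 0" "g x \<noteq> 0"
proof -
  obtain y z where yz: "y \<in> span B" "\<And>w. w \<in> span B \<Longrightarrow> orthogonal z w" "x = y + z"
    using orthogonal_subspace_decomp_exists[of B x] by blast
  have "z \<noteq> 0" using yz assms by auto
  have "z \<bullet> x = z \<bullet> z" using yz(2)[OF yz(1)] yz(3)
    by (simp add: inner_add_right orthogonal_def)
  then show ?thesis
    using that[of "\<lambda>v. z \<bullet> v"] \<open>z \<noteq> 0\<close> yz(2)
    by (simp add: bounded_linear.linear[OF bounded_linear_inner_right] orthogonal_def)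
qed

text \<open>Combine separating functionals \<open>h + t g\<close>, avoiding the finitely many bad values of \<open>t\<close>.\<close>

lemma exists_functional_nonzero_outside_span:
  fixes B :: "'a::euclidean_space set"
  assumes "finite X" "\<And>x. x \<in> X \<Longrightarrow> x \<notin> span B"
  shows "\<exists>h::'a \<Rightarrow> real. linear h \<and> (\<forall>b\<in>span B. h b = 0) \<and> (\<forall>x\<in>X. h x \<noteq> 0)"
  using assms
proof (induction X rule: finite_induct)
  case empty
  show ?case by (intro exI[of _ "\<lambda>x. 0"]) (simp add: linear_zero)
next
  case (insert x X)
  obtain h :: "'a \<Rightarrow> real" where h: "linear h" "\<forall>b\<in>span B. h b = 0" "\<forall>x\<in>X. h x \<noteq> 0"
    using insert.IH insert.prems by auto
  obtain g :: "'a \<Rightarrow> real" where g: "linear g" "\<And>b. b \<in> span B \<Longrightarrow> g b = 0" "g x \<noteq> 0"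
    using exists_functional_separating insert.prems by blast
  have "finite ((\<lambda>x'. - h x' / g x') ` insert x X)" using insert.hyps(1) by simp
  then obtain t where t: "t \<notin> (\<lambda>x'. - h x' / g x') ` insert x X"
    using ex_new_if_finite[OF infinite_UNIV_char_0] by blast
  have "h x' + t * g x' \<noteq> 0" if "x' \<in> insert x X" for x'
  proof (cases "g x' = 0")
    case True
    then show ?thesis using that g h by auto
  next
    case False
    show ?thesis
    proof
      assume "h x' + t * g x' = 0"
      then have "t = - h x' / g x'" using False by (simp add: field_simps add_eq_0_iff)
      then show False using t that by blast
    qed
  qed
  moreover have "linear (\<lambda>v. h v + t * g v)" using h(1) g(1) by (rule linear_add_mult)
  ultimately show ?case using h(2) g(2) by (intro exI[of _ "\<lambda>v. h v + t * g v"]) simp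
qed

lemma exists_functional_zero_set:
  fixes V :: "'i \<Rightarrow> 'a::euclidean_space"
  assumes "finite J"
  obtains h :: "'a \<Rightarrow> real" where "linear h" "\<And>b. b \<in> span B \<Longrightarrow> h b = 0"
    "\<And>j. j \<in> J \<Longrightarrow> h (V j) = 0 \<longleftrightarrow> V j \<in> span B"
proof -
  have "finite (V ` {j \<in> J. V j \<notin> span B})" "\<And>x. x \<in> V ` {j \<in> J. V j \<notin> span B} \<Longrightarrow> x \<notin> span B"
    using assms by auto
  from exists_functional_nonzero_outside_span[OF this]
  obtain h :: "'a \<Rightarrow> real" where h: "linear h" "\<forall>b\<in>span B. h b = 0"
    "\<forall>x\<in>V ` {j \<in> J. V j \<notin> span B}. h x \<noteq> 0"
    by auto
  have "h (V j) = 0 \<longleftrightarrow> V j \<in> span B" if "j \<in> J" for j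
    using h(2,3) that by blast
  then show ?thesis using that h(1,2) by blast
qed

lemma exists_projection_kernel_span:
  fixes B :: "'a::euclidean_space set"
  obtains p :: "'a \<Rightarrow> 'a" where "linear p" "\<And>x. x - p x \<in> span B" "\<And>x. p x = 0 \<longleftrightarrow> x \<in> span B"
proof -
  obtain T where T: "0 \<notin> T" "T \<subseteq> span B" "pairwise orthogonal T" "independent T"
    "card T = dim (span B)" "span T = span B"
    using orthogonal_basis_subspace subspace_span by blast
  define p where "p = (\<lambda>x. x - (\<Sum>b\<in>T. (b \<bullet> x / (b \<bullet> b)) *\<^sub>R b))"
  have "linear p"
  proof (rule linearI)
    show "p (x + y) = p x + p y" for x y
      unfolding p_def inner_add_right add_divide_distrib scaleR_add_left sum.distrib by simp
    show "p (c *\<^sub>R x) = c *\<^sub>R p x" for c x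
      unfolding p_def inner_scaleR_right scaleR_diff_right scaleR_sum_right by (simp add: scaleR_scaleR)
  qed
  moreover have diff: "x - p x \<in> span B" for x
    unfolding p_def using T(2) by (simp add: span_sum span_mul span_base subsetD)
  moreover have "p x = 0 \<longleftrightarrow> x \<in> span B" for x
  proof
    assume "p x = 0"
    then show "x \<in> span B" using diff[of x] by simp
  next
    assume x: "x \<in> span B"
    then have "p x \<in> span B" using span_diff[OF x diff[of x]] by simp
    moreover have "orthogonal w (p x)" if "w \<in> span B" for w
      unfolding p_def using Gram_Schmidt_step[OF T(3), of w x] that T(6) by simp
    ultimately have "orthogonal (p x) (p x)" by blast
    then show "p x = 0" by (simp add: orthogonal_def)
  qed
  ultimately show ?thesis using that by blast
qed

lemma span_pair_E:
  fixes a b c :: "'a::real_vector"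
  assumes "c \<in> span {a, b}"
  obtains \<alpha> \<beta> where "c = \<alpha> *\<^sub>R a + \<beta> *\<^sub>R b"
proof -
  obtain k where "c - k *\<^sub>R a \<in> span {b}" using assms span_breakdown_eq[of c a "{b}"] by auto
  then obtain l where "c - k *\<^sub>R a = l *\<^sub>R b" by (auto simp: span_singleton)
  then show ?thesis using that[of k l] by (simp add: algebra_simps)
qed

lemma card_insert_le_dim:
  fixes B :: "'a::euclidean_space set"
  assumes "independent B" "v \<notin> span B" "insert v B \<subseteq> S"
  shows "card B + 1 \<le> dim S"
proof -
  have "independent (insert v B)" using assms(2,1) by (rule independent_insertI)
  moreover have "v \<notin> B" using assms(2) span_base by blast
  ultimately show ?thesis
    using independent_card_le_dim[OF assms(3)] finiteI_independent[OF assms(1)] by simp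
qed

lemma exists_independent_subset_card:
  fixes S :: "'a::euclidean_space set"
  assumes "d \<le> dim S"
  obtains B where "B \<subseteq> S" "independent B" "card B = d"
proof -
  obtain D where D: "D \<subseteq> S" "independent D" "S \<subseteq> span D" "card D = dim S"
    using basis_exists by blast
  then obtain B where "B \<subseteq> D" "card B = d" using assms by (metis obtain_subset_with_card_n)
  then show ?thesis using that D(1) independent_mono[OF D(2)] by blast
qed

lemma subset_span_Un_if_image_subset:
  fixes p :: "'a::real_vector \<Rightarrow> 'a"
  assumes "\<And>x. x - p x \<in> span B" "p ` X \<subseteq> span C"
  shows "X \<subseteq> span (B \<union> C)"
proof
  fix x assume "x \<in> X"
  then have "p x \<in> span (B \<union> C)" "x - p x \<in> span (B \<union> C)"
    using assms span_mono[of C "B \<union> C"] span_mono[of B "B \<union> C"] by auto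
  from span_add[OF this] show "x \<in> span (B \<union> C)" by simp
qed

lemma not_subset_span_Un_pair:
  fixes S :: "'a::euclidean_space set"
  assumes "finite B" "dim S = card B + 3" "S \<subseteq> span T"
  shows "\<not> T \<subseteq> span (B \<union> {c, d})"
proof
  assume "T \<subseteq> span (B \<union> {c, d})"
  then have "span T \<subseteq> span (B \<union> {c, d})" by (simp add: span_minimal)
  then have "dim S \<le> card (B \<union> {c, d})" using assms(1,3) by (intro dim_le_card) auto
  also have "\<dots> \<le> card B + card {c, d}" by (rule card_Un_le)
  also have "\<dots> \<le> card B + 2" by (simp add: card_insert_le_m1)
  finally show False using assms(2) by simp
qed

lemma dim_image_less_if_not_vanishing:
  fixes V :: "'i \<Rightarrow> 'a::euclidean_space"
  assumes "K \<subseteq> J" "linear h" "\<And>k. k \<in> K \<Longrightarrow> h (V k) = 0" "j \<in> J" "h (V j) \<noteq> 0"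
  shows "dim (V ` K) < dim (V ` J)"
proof (rule ccontr)
  assume "\<not> dim (V ` K) < dim (V ` J)"
  moreover have "span (V ` K) \<subseteq> span (V ` J)" using assms(1) by (intro span_mono) auto
  ultimately have "span (V ` K) = span (V ` J)"
    using subspace_dim_equal[of "span (V ` K)" "span (V ` J)"] by (simp add: subspace_span)
  then have "V j \<in> span (V ` K)" using assms(4) by (simp add: span_base)
  then have "h (V j) = 0"
    using real_vector.linear_eq_0_on_span[OF assms(2)] assms(3) by blast
  then show False using assms(5) by simp
qed

section \<open>The Sylvester--Gallai theorem\<close>

lemma sorted_three_reals_close_pair:
  fixes u v w t :: real
  assumes "u < v" "v < w"
  shows "\<exists>\<sigma> \<phi>. \<sigma> \<in> {u, v, w} \<and> \<phi> \<in> {u, v, w} \<and> \<sigma> \<noteq> \<phi> \<and> (\<phi> - \<sigma>)\<^sup>2 \<le> (\<phi> - t)\<^sup>2"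
proof (cases "t \<le> v")
  case True
  have "(w - v)\<^sup>2 \<le> (w - t)\<^sup>2" using True assms by (intro power_mono) auto
  then show ?thesis using assms by (intro exI[of _ v] exI[of _ w]) auto
next
  case False
  have "(v - u)\<^sup>2 \<le> (t - u)\<^sup>2" using False assms by (intro power_mono) auto
  then have "(u - v)\<^sup>2 \<le> (u - t)\<^sup>2" by (simp add: power2_commute)
  then show ?thesis using assms by (intro exI[of _ v] exI[of _ u]) auto
qed

lemma three_reals_close_pair:
  fixes u v w t :: real
  assumes "u \<noteq> v" "v \<noteq> w" "u \<noteq> w"
  shows "\<exists>\<sigma> \<phi>. \<sigma> \<in> {u, v, w} \<and> \<phi> \<in> {u, v, w} \<and> \<sigma> \<noteq> \<phi> \<and> (\<phi> - \<sigma>)\<^sup>2 \<le> (\<phi> - t)\<^sup>2"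
proof -
  have "{u, v, w} = {v, u, w}" "{u, v, w} = {u, w, v}" "{u, v, w} = {w, v, u}"
    "{u, v, w} = {v, w, u}" "{u, v, w} = {w, u, v}"
    by auto
  moreover consider "u < v" "v < w" | "v < u" "u < w" | "u < w" "w < v"
    | "w < v" "v < u" | "v < w" "w < u" | "w < u" "u < v"
    using assms by linarith
  ultimately show ?thesis using sorted_three_reals_close_pair by metis
qed

definition on_line :: "'a::real_vector \<Rightarrow> 'a \<Rightarrow> 'a \<Rightarrow> bool" where
  "on_line y z x \<longleftrightarrow> (\<exists>t. x = y + t *\<^sub>R (z - y))"

text \<open>Squared distance from \<open>x\<close> to the line through \<open>y\<close> and \<open>z\<close> (Pythagoras).\<close>

definition dist2_line :: "'a::real_inner \<Rightarrow> 'a \<Rightarrow> 'a \<Rightarrow> real" where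
  "dist2_line x y z = (x - y) \<bullet> (x - y) - ((x - y) \<bullet> (z - y))\<^sup>2 / ((z - y) \<bullet> (z - y))"

lemma dist2_line_orthogonal:
  fixes e n :: "'a::real_inner"
  assumes "e \<bullet> n = 0" "e \<noteq> 0" "x - y = t *\<^sub>R e + n" "z - y = e"
  shows "dist2_line x y z = n \<bullet> n"
  using assms by (simp add: dist2_line_def inner_add_left inner_add_right inner_commute power2_eq_square)

lemma dist2_line_less_orthogonal:
  fixes e n :: "'a::real_inner"
  assumes "e \<bullet> n = 0" "e \<noteq> 0" "n \<noteq> 0" "a\<^sup>2 \<le> 2 * a * b"
    and "p - x = a *\<^sub>R e - n" "q - x = b *\<^sub>R e - n"
  shows "dist2_line p x q < n \<bullet> n"
proof -
  define E where "E = e \<bullet> e"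
  define N where "N = n \<bullet> n"
  have E: "E > 0" and N: "N > 0" using assms(2,3) by (simp_all add: E_def N_def)
  have "n \<bullet> e = 0" using assms(1) by (simp add: inner_commute)
  then have "dist2_line p x q = (a\<^sup>2 * E + N) - (a * b * E + N)\<^sup>2 / (b\<^sup>2 * E + N)"
    unfolding dist2_line_def assms(5,6)
    by (simp add: inner_diff_left inner_diff_right assms(1) N_def E_def power2_eq_square mult_ac)
  also have "\<dots> < N"
  proof -
    have "E * (a\<^sup>2 - 2 * a * b) \<le> 0" using assms(4) E by (simp add: mult_nonneg_nonpos)
    have "(a\<^sup>2 * E + N) * (b\<^sup>2 * E + N) - (a * b * E + N)\<^sup>2
        = N * (b\<^sup>2 * E) + N * (E * (a\<^sup>2 - 2 * a * b))"
      by (simp add: power2_eq_square algebra_simps)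
    also have "\<dots> < N * (b\<^sup>2 * E + N)"
      using \<open>E * (a\<^sup>2 - 2 * a * b) \<le> 0\<close> N by (simp add: distrib_left mult_nonneg_nonpos)
    moreover have "b\<^sup>2 * E + N > 0" using E N by (simp add: add_nonneg_pos)
    ultimately show ?thesis by (simp add: field_simps)
  qed
  finally show ?thesis by (simp add: N_def)
qed

text \<open>Kelly's descent step: if the line \<open>yz\<close> carries a third point \<open>w\<close>, then of the three points
  \<open>y, z, w\<close> on it two, \<open>p\<^sub>\<sigma>\<close> and \<open>p\<^sub>\<phi>\<close>, lie on the same side of the foot of \<open>x\<close>, with \<open>p\<^sub>\<sigma>\<close>
  nearer the foot; then \<open>p\<^sub>\<sigma>\<close> is strictly closer to the line \<open>x p\<^sub>\<phi>\<close> than \<open>x\<close> is to \<open>yz\<close>.\<close>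

lemma sylvester_gallai_descent:
  fixes x y z :: "'a::euclidean_space"
  assumes "y \<noteq> z" "\<not> on_line y z x" "\<sigma> \<noteq> \<phi>"
    and close: "(\<phi> - \<sigma>)\<^sup>2 \<le> (\<phi> - ((x - y) \<bullet> (z - y)) / ((z - y) \<bullet> (z - y)))\<^sup>2"
  defines "p\<^sub>\<sigma> \<equiv> y + \<sigma> *\<^sub>R (z - y)" and "p\<^sub>\<phi> \<equiv> y + \<phi> *\<^sub>R (z - y)"
  shows "\<not> on_line x p\<^sub>\<phi> p\<^sub>\<sigma>" "x \<noteq> p\<^sub>\<phi>" "dist2_line p\<^sub>\<sigma> x p\<^sub>\<phi> < dist2_line x y z"
proof -
  define e where "e = z - y"
  define t where "t = ((x - y) \<bullet> e) / (e \<bullet> e)"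
  define n where "n = x - y - t *\<^sub>R e"
  have "e \<noteq> 0" using assms(1) by (simp add: e_def)
  then have en: "e \<bullet> n = 0" by (simp add: n_def t_def inner_diff_right inner_diff_left inner_commute)
  have "n \<noteq> 0"
  proof
    assume "n = 0"
    then have "x = y + t *\<^sub>R (z - y)" by (simp add: n_def e_def algebra_simps)
    then show False using assms(2) by (auto simp: on_line_def)
  qed
  define a where "a = \<sigma> - t"
  define b where "b = \<phi> - t"
  have p\<^sub>\<sigma>: "p\<^sub>\<sigma> - x = a *\<^sub>R e - n" and p\<^sub>\<phi>: "p\<^sub>\<phi> - x = b *\<^sub>R e - n"
    by (simp_all add: p\<^sub>\<sigma>_def p\<^sub>\<phi>_def n_def a_def b_def e_def algebra_simps)
  have "n \<bullet> e = 0" using en by (simp add: inner_commute)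
  then have inner_n: "(c *\<^sub>R e - n) \<bullet> n = - (n \<bullet> n)" for c by (simp add: inner_diff_left en)
  show "\<not> on_line x p\<^sub>\<phi> p\<^sub>\<sigma>"
  proof
    assume "on_line x p\<^sub>\<phi> p\<^sub>\<sigma>"
    then obtain s where "p\<^sub>\<sigma> = x + s *\<^sub>R (p\<^sub>\<phi> - x)" unfolding on_line_def by blast
    then have eq: "a *\<^sub>R e - n = s *\<^sub>R (b *\<^sub>R e - n)" using p\<^sub>\<sigma> p\<^sub>\<phi> by simp
    then have "(a *\<^sub>R e - n) \<bullet> n = s * ((b *\<^sub>R e - n) \<bullet> n)" by simp
    then have "s = 1" using \<open>n \<noteq> 0\<close> by (simp add: inner_n)
    then have "a = b" using eq \<open>e \<noteq> 0\<close> by simp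
    then show False using assms(3) by (simp add: a_def b_def)
  qed
  show "x \<noteq> p\<^sub>\<phi>" using p\<^sub>\<phi> inner_n[of b] \<open>n \<noteq> 0\<close> by force
  have "(b - a)\<^sup>2 \<le> b\<^sup>2" using close by (simp add: a_def b_def t_def e_def)
  then have "a\<^sup>2 \<le> 2 * a * b" by (simp add: power2_eq_square algebra_simps)
  then have "dist2_line p\<^sub>\<sigma> x p\<^sub>\<phi> < n \<bullet> n"
    using dist2_line_less_orthogonal[OF en \<open>e \<noteq> 0\<close> \<open>n \<noteq> 0\<close> _ p\<^sub>\<sigma> p\<^sub>\<phi>] by blast
  moreover have "dist2_line x y z = n \<bullet> n"
    by (rule dist2_line_orthogonal[OF en \<open>e \<noteq> 0\<close>, of _ _ t]) (simp_all add: n_def e_def)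
  ultimately show "dist2_line p\<^sub>\<sigma> x p\<^sub>\<phi> < dist2_line x y z" by simp
qed

text \<open>Kelly's proof: a triple minimizing the distance from a point to a line through two
  others spans an ordinary line, as otherwise the descent step gives a closer triple.\<close>

theorem sylvester_gallai:
  fixes Q :: "'a::euclidean_space set"
  assumes "finite Q" "x\<^sub>0 \<in> Q" "y\<^sub>0 \<in> Q" "z\<^sub>0 \<in> Q" "y\<^sub>0 \<noteq> z\<^sub>0" "\<not> on_line y\<^sub>0 z\<^sub>0 x\<^sub>0"
  shows "\<exists>y\<in>Q. \<exists>z\<in>Q. y \<noteq> z \<and> (\<forall>x\<in>Q. on_line y z x \<longrightarrow> x = y \<or> x = z)"
proof -
  define T where "T = {(x, y, z). x \<in> Q \<and> y \<in> Q \<and> z \<in> Q \<and> y \<noteq> z \<and> \<not> on_line y z x}"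
  define d where "d = (\<lambda>(x::'a, y::'a, z::'a). dist2_line x y z)"
  have "T \<subseteq> Q \<times> Q \<times> Q" by (auto simp: T_def)
  then have "finite T" using assms(1) by (meson finite_SigmaI finite_subset)
  moreover have "T \<noteq> {}" using assms by (auto simp: T_def)
  ultimately have "arg_min_on d T \<in> T" and min: "\<not> (\<exists>t\<in>T. d t < d (arg_min_on d T))"
    using arg_min_if_finite[of T d] by auto
  moreover obtain x y z where m: "arg_min_on d T = (x, y, z)" by (cases "arg_min_on d T") auto
  ultimately have Q: "x \<in> Q" "y \<in> Q" "z \<in> Q" "y \<noteq> z" "\<not> on_line y z x" by (auto simp: T_def)
  have "w = y \<or> w = z" if "w \<in> Q" and w_on: "on_line y z w" for w
  proof (rule ccontr)
    assume "\<not> (w = y \<or> w = z)"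
    moreover obtain \<tau> where \<tau>: "w = y + \<tau> *\<^sub>R (z - y)" using w_on by (auto simp: on_line_def)
    ultimately have "\<tau> \<noteq> 0" "\<tau> \<noteq> 1" by auto
    then obtain \<sigma> \<phi> where \<sigma>\<phi>: "\<sigma> \<in> {0, 1, \<tau>}" "\<phi> \<in> {0, 1, \<tau>}" "\<sigma> \<noteq> \<phi>"
      "(\<phi> - \<sigma>)\<^sup>2 \<le> (\<phi> - ((x - y) \<bullet> (z - y)) / ((z - y) \<bullet> (z - y)))\<^sup>2"
      using three_reals_close_pair[of 0 1 \<tau> "((x - y) \<bullet> (z - y)) / ((z - y) \<bullet> (z - y))"]
      by auto
    have onQ: "y + c *\<^sub>R (z - y) \<in> Q" if "c \<in> {0, 1, \<tau>}" for c
      using that Q \<open>w \<in> Q\<close> \<tau> by auto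
    note descent = sylvester_gallai_descent[OF Q(4,5) \<sigma>\<phi>(3,4)]
    have "(y + \<sigma> *\<^sub>R (z - y), x, y + \<phi> *\<^sub>R (z - y)) \<in> T"
      using descent(1,2) onQ[OF \<sigma>\<phi>(1)] onQ[OF \<sigma>\<phi>(2)] Q(1) by (auto simp: T_def)
    moreover have "d (y + \<sigma> *\<^sub>R (z - y), x, y + \<phi> *\<^sub>R (z - y)) < d (arg_min_on d T)"
      using descent(3) unfolding m by (simp add: d_def)
    ultimately show False using min by blast
  qed
  then show ?thesis using Q by blast
qed

definition central_proj :: "('a::real_vector \<Rightarrow> real) \<Rightarrow> 'a \<Rightarrow> 'a" where
  "central_proj h c = (1 / h c) *\<^sub>R c"

lemma central_proj_eq_iff:
  fixes h :: "'a::real_vector \<Rightarrow> real"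
  assumes "linear h" "h a \<noteq> 0" "h c \<noteq> 0"
  shows "central_proj h c = central_proj h a \<longleftrightarrow> c \<in> span {a}"
proof
  assume eq: "central_proj h c = central_proj h a"
  have "c = h c *\<^sub>R central_proj h c" using assms(3) by (simp add: central_proj_def)
  also have "\<dots> = h c *\<^sub>R central_proj h a" using eq by simp
  also have "\<dots> = (h c / h a) *\<^sub>R a" by (simp add: central_proj_def)
  finally show "c \<in> span {a}" by (metis span_base span_mul singletonI)
next
  assume "c \<in> span {a}"
  then obtain k where k: "c = k *\<^sub>R a" by (auto simp: span_singleton)
  then have "h c = k * h a" using assms(1) by (simp add: linear_scale)
  then show "central_proj h c = central_proj h a"
    using assms(2,3) k by (simp add: central_proj_def)
qed

lemma on_line_central_proj_iff:
  fixes h :: "'a::real_vector \<Rightarrow> real"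
  assumes "linear h" "h a \<noteq> 0" "h b \<noteq> 0" "h c \<noteq> 0"
  shows "on_line (central_proj h a) (central_proj h b) (central_proj h c) \<longleftrightarrow> c \<in> span {a, b}"
proof
  assume "on_line (central_proj h a) (central_proj h b) (central_proj h c)"
  then obtain t where t: "central_proj h c = (1 - t) *\<^sub>R central_proj h a + t *\<^sub>R central_proj h b"
    by (auto simp: on_line_def algebra_simps)
  have "c = h c *\<^sub>R central_proj h c" using assms(4) by (simp add: central_proj_def)
  also have "\<dots> = (h c * (1 - t) / h a) *\<^sub>R a + (h c * t / h b) *\<^sub>R b"
    unfolding t by (simp add: central_proj_def scaleR_add_right)
  finally show "c \<in> span {a, b}"
    by (metis span_add span_mul span_base insertI1 insertI2 singletonI)
next
  assume "c \<in> span {a, b}"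
  then obtain \<alpha> \<beta> where c: "c = \<alpha> *\<^sub>R a + \<beta> *\<^sub>R b" by (rule span_pair_E)
  have hc: "h c = \<alpha> * h a + \<beta> * h b" using assms(1) c by (simp add: linear_add linear_scale)
  define t where "t = \<beta> * h b / h c"
  have "central_proj h a + t *\<^sub>R (central_proj h b - central_proj h a)
      = (1 - t) *\<^sub>R central_proj h a + t *\<^sub>R central_proj h b"
    by (simp add: algebra_simps)
  also have "1 - t = \<alpha> * h a / h c" using hc assms(4) by (simp add: t_def field_simps)
  also have "(\<alpha> * h a / h c) *\<^sub>R central_proj h a + t *\<^sub>R central_proj h b
      = (1 / h c) *\<^sub>R (\<alpha> *\<^sub>R a + \<beta> *\<^sub>R b)"
    using assms(2,3) by (simp add: central_proj_def t_def scaleR_add_right)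
  also have "\<dots> = central_proj h c" by (simp add: central_proj_def c)
  finally show "on_line (central_proj h a) (central_proj h b) (central_proj h c)"
    unfolding on_line_def by (intro exI[of _ t]) simp
qed

text \<open>The linear form of Sylvester--Gallai: centrally project onto an affine hyperplane missing
  all the vectors; lines through the origin become points, planes become lines.\<close>

lemma sylvester_gallai_vectors:
  fixes S :: "'a::euclidean_space set"
  assumes "finite S" "0 \<notin> S" "\<And>a b. \<not> S \<subseteq> span {a, b}"
  shows "\<exists>a\<in>S. \<exists>b\<in>S. b \<notin> span {a} \<and> (\<forall>c\<in>S. c \<in> span {a, b} \<longrightarrow> c \<in> span {a} \<or> c \<in> span {b})"
proof -
  have "\<And>x. x \<in> S \<Longrightarrow> x \<notin> span {}" using assms(2) by auto
  then obtain h :: "'a \<Rightarrow> real" where h: "linear h" "\<forall>x\<in>S. h x \<noteq> 0"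
    using exists_functional_nonzero_outside_span[OF assms(1)] by blast
  let ?q = "central_proj h"
  note proj_eq = central_proj_eq_iff[OF h(1)] and proj_line = on_line_central_proj_iff[OF h(1)]
  obtain a\<^sub>0 where a\<^sub>0: "a\<^sub>0 \<in> S" using assms(3)[of 0 0] by auto
  obtain b\<^sub>0 where b\<^sub>0: "b\<^sub>0 \<in> S" "b\<^sub>0 \<notin> span {a\<^sub>0}" using assms(3)[of a\<^sub>0 a\<^sub>0] by auto
  obtain c\<^sub>0 where c\<^sub>0: "c\<^sub>0 \<in> S" "c\<^sub>0 \<notin> span {a\<^sub>0, b\<^sub>0}" using assms(3)[of a\<^sub>0 b\<^sub>0] by auto
  have "?q b\<^sub>0 \<noteq> ?q a\<^sub>0" using proj_eq[of a\<^sub>0 b\<^sub>0] h(2) a\<^sub>0 b\<^sub>0 by simp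
  moreover have "\<not> on_line (?q a\<^sub>0) (?q b\<^sub>0) (?q c\<^sub>0)"
    using proj_line[of a\<^sub>0 b\<^sub>0 c\<^sub>0] h(2) a\<^sub>0 b\<^sub>0 c\<^sub>0 by simp
  ultimately obtain y z where yz: "y \<in> ?q ` S" "z \<in> ?q ` S" "y \<noteq> z"
    "\<forall>x\<in>?q ` S. on_line y z x \<longrightarrow> x = y \<or> x = z"
    using sylvester_gallai[of "?q ` S" "?q c\<^sub>0" "?q a\<^sub>0" "?q b\<^sub>0"] assms(1) a\<^sub>0 b\<^sub>0 c\<^sub>0 by auto
  then obtain a b where ab: "a \<in> S" "b \<in> S" "y = ?q a" "z = ?q b" by blast
  have "b \<notin> span {a}" using proj_eq[of a b] h(2) ab yz(3) by auto
  moreover have "c \<in> span {a} \<or> c \<in> span {b}" if "c \<in> S" "c \<in> span {a, b}" for c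
  proof -
    have "?q c = ?q a \<or> ?q c = ?q b"
      using yz(4) proj_line[of a b c] h(2) ab that by auto
    then show ?thesis using proj_eq h(2) ab that by blast
  qed
  ultimately show ?thesis using ab by blast
qed

section \<open>Cancelling opposite pairs\<close>

definition no_opposites_mod :: "('i \<Rightarrow> 'a::real_vector) \<Rightarrow> 'a set \<Rightarrow> 'i set \<Rightarrow> bool" where
  "no_opposites_mod V B R \<longleftrightarrow> (\<forall>a\<in>R. \<forall>b\<in>R. \<forall>c>0. a \<noteq> b \<longrightarrow> V a + c *\<^sub>R V b \<notin> span B)"

definition balanced_mod :: "('i \<Rightarrow> 'a::euclidean_space) \<Rightarrow> 'a set \<Rightarrow> 'i set \<Rightarrow> bool" where
  "balanced_mod V B S \<longleftrightarrow> (\<forall>(h\<^sub>1::'a \<Rightarrow> real) (h\<^sub>2::'a \<Rightarrow> real). linear h\<^sub>1 \<longrightarrow> linear h\<^sub>2 \<longrightarrow>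
      (\<forall>b\<in>B. h\<^sub>1 b = 0) \<longrightarrow> (\<forall>b\<in>B. h\<^sub>2 b = 0) \<longrightarrow> discrepancy V {j \<in> S. h\<^sub>1 (V j) = 0} h\<^sub>2 = 0)"

lemma balanced_modD:
  fixes V :: "'i \<Rightarrow> 'a::euclidean_space" and h\<^sub>1 h\<^sub>2 :: "'a \<Rightarrow> real"
  assumes "balanced_mod V B S" "linear h\<^sub>1" "linear h\<^sub>2" "\<forall>b\<in>B. h\<^sub>1 b = 0" "\<forall>b\<in>B. h\<^sub>2 b = 0"
  shows "discrepancy V {j \<in> S. h\<^sub>1 (V j) = 0} h\<^sub>2 = 0"
  using assms unfolding balanced_mod_def by blast

lemma balanced_mod_empty: "balanced_mod V B {}"
  by (simp add: balanced_mod_def)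

lemma balanced_mod_Un:
  fixes V :: "'i \<Rightarrow> 'a::euclidean_space"
  assumes "finite S" "finite T" "S \<inter> T = {}" "balanced_mod V B S" "balanced_mod V B T"
  shows "balanced_mod V B (S \<union> T)"
  unfolding balanced_mod_def
proof (intro allI impI)
  fix h\<^sub>1 h\<^sub>2 :: "'a \<Rightarrow> real"
  assume h: "linear h\<^sub>1" "linear h\<^sub>2" "\<forall>b\<in>B. h\<^sub>1 b = 0" "\<forall>b\<in>B. h\<^sub>2 b = 0"
  have "{j \<in> S \<union> T. h\<^sub>1 (V j) = 0} = {j \<in> S. h\<^sub>1 (V j) = 0} \<union> {j \<in> T. h\<^sub>1 (V j) = 0}" by auto
  then show "discrepancy V {j \<in> S \<union> T. h\<^sub>1 (V j) = 0} h\<^sub>2 = 0"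
    using assms h discrepancy_Un_disjoint[of "{j \<in> S. h\<^sub>1 (V j) = 0}" "{j \<in> T. h\<^sub>1 (V j) = 0}" V h\<^sub>2]
    by (auto simp: balanced_mod_def)
qed

text \<open>On every functional vanishing on \<open>B\<close>, the values at \<open>V a\<close> and \<open>V b\<close> have opposite signs
  or both vanish.\<close>

lemma balanced_mod_opposite_pair:
  fixes V :: "'i \<Rightarrow> 'a::euclidean_space"
  assumes "a \<noteq> b" "c > 0" "V a + c *\<^sub>R V b \<in> span B"
  shows "balanced_mod V B {a, b}"
  unfolding balanced_mod_def
proof (intro allI impI)
  fix h\<^sub>1 h\<^sub>2 :: "'a \<Rightarrow> real"
  assume h: "linear h\<^sub>1" "linear h\<^sub>2" "\<forall>b\<in>B. h\<^sub>1 b = 0" "\<forall>b\<in>B. h\<^sub>2 b = 0"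
  have opp: "h (V a) = - c * h (V b)" if "linear h" "\<forall>b\<in>B. h b = 0" for h :: "'a \<Rightarrow> real"
  proof -
    have "h (V a + c *\<^sub>R V b) = 0"
      using real_vector.linear_eq_0_on_span[OF that(1)] that(2) assms(3) by blast
    then show ?thesis using that(1) by (simp add: linear_add linear_scale eq_neg_iff_add_eq_0)
  qed
  show "discrepancy V {j \<in> {a, b}. h\<^sub>1 (V j) = 0} h\<^sub>2 = 0"
  proof (cases "h\<^sub>1 (V b) = 0")
    case True
    then have "{j \<in> {a, b}. h\<^sub>1 (V j) = 0} = {a} \<union> {b}" using opp[OF h(1,3)] by auto
    moreover have "discrepancy V ({a} \<union> {b}) h\<^sub>2 = discrepancy V {a} h\<^sub>2 + discrepancy V {b} h\<^sub>2"
      using assms(1) by (intro discrepancy_Un_disjoint) auto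
    ultimately show ?thesis
      using opp[OF h(2,4)] assms(2) by (simp add: discrepancy_singleton mult_less_0_iff zero_less_mult_iff)
  next
    case False
    then have empty: "{j \<in> {a, b}. h\<^sub>1 (V j) = 0} = {}" using opp[OF h(1,3)] assms(2) by auto
    show ?thesis unfolding empty by simp
  qed
qed

lemma exists_no_opposites_balanced_rest:
  fixes V :: "'i \<Rightarrow> 'a::euclidean_space"
  assumes "finite S"
  shows "\<exists>R\<subseteq>S. no_opposites_mod V B R \<and> balanced_mod V B (S - R)"
  using assms
proof (induction "card S" arbitrary: S rule: less_induct)
  case less
  show ?case
  proof (cases "no_opposites_mod V B S")
    case True
    then show ?thesis using balanced_mod_empty[of V B] by (intro exI[of _ S]) auto
  next
    case False
    then obtain a b c where ab: "a \<in> S" "b \<in> S" "a \<noteq> b" "c > 0" "V a + c *\<^sub>R V b \<in> span B"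
      by (auto simp: no_opposites_mod_def)
    have "card (S - {a, b}) < card S" using ab less.prems by (intro psubset_card_mono) auto
    then obtain R where R: "R \<subseteq> S - {a, b}" "no_opposites_mod V B R" "balanced_mod V B (S - {a, b} - R)"
      using less.hyps[of "S - {a, b}"] less.prems by auto
    have "S - R = (S - {a, b} - R) \<union> {a, b}" using R(1) ab(1,2) by auto
    moreover have "balanced_mod V B ((S - {a, b} - R) \<union> {a, b})"
      using less.prems R(3) balanced_mod_opposite_pair[OF ab(3-5)] by (intro balanced_mod_Un) auto
    ultimately show ?thesis using R(1,2) by (intro exI[of _ R]) auto
  qed
qed

lemma discrepancy_eq_0_if_balanced_mod:
  fixes V :: "'i \<Rightarrow> 'a::euclidean_space"
  assumes "balanced_mod V B S" "linear f" "\<And>b. b \<in> B \<Longrightarrow> f b = 0"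
  shows "discrepancy V S f = 0"
proof -
  have "linear (\<lambda>x::'a. 0::real)" by (simp add: linear_zero)
  from assms(1)[unfolded balanced_mod_def, rule_format, OF this assms(2) refl assms(3)]
  show ?thesis by simp
qed

lemma pos_coeff_if_no_opposites_mod:
  fixes V :: "'i \<Rightarrow> 'a::real_vector"
  assumes "no_opposites_mod V B R" "x \<in> R" "y \<in> R" "V x \<notin> span B" "V y \<notin> span B"
    and "V x - \<beta> *\<^sub>R V y \<in> span B"
  shows "\<beta> > 0"
proof (rule ccontr)
  assume "\<not> \<beta> > 0"
  show False
  proof (cases "x = y")
    case True
    then have "(1 - \<beta>) *\<^sub>R V y \<in> span B" using assms(6) by (simp add: algebra_simps)
    then have "(1 / (1 - \<beta>)) *\<^sub>R ((1 - \<beta>) *\<^sub>R V y) \<in> span B" by (rule span_mul)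
    then show False using \<open>\<not> \<beta> > 0\<close> assms(5) by simp
  next
    case False
    have "\<beta> \<noteq> 0" using assms(4,6) by auto
    then have "V x + (- \<beta>) *\<^sub>R V y \<in> span B" "- \<beta> > 0" using assms(6) \<open>\<not> \<beta> > 0\<close> by simp_all
    then show False using assms(1-3) False unfolding no_opposites_mod_def by blast
  qed
qed

lemma discrepancy_zero_set_eq_residue:
  fixes V :: "'i \<Rightarrow> 'a::euclidean_space" and h\<^sub>1 h\<^sub>2 :: "'a \<Rightarrow> real"
  assumes "finite J" "R \<subseteq> {j \<in> J. V j \<notin> span B}" "balanced_mod V B ({j \<in> J. V j \<notin> span B} - R)"
    and h: "linear h\<^sub>1" "linear h\<^sub>2" "\<forall>b\<in>B. h\<^sub>1 b = 0" "\<forall>b\<in>B. h\<^sub>2 b = 0"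
  shows "discrepancy V {j \<in> J. h\<^sub>1 (V j) = 0} h\<^sub>2 = discrepancy V {j \<in> R. h\<^sub>1 (V j) = 0} h\<^sub>2"
proof -
  let ?K = "{j \<in> J. h\<^sub>1 (V j) = 0}"
  have fin: "finite ?K" "finite {j \<in> ?K. V j \<notin> span B}" using assms(1) by simp_all
  have "discrepancy V {j \<in> ?K. V j \<in> span B} h\<^sub>2 = 0"
    using real_vector.linear_eq_0_on_span[OF h(2)] h(4) by (intro discrepancy_eq_0_if_vanishing) auto
  moreover have "discrepancy V {j \<in> {j \<in> ?K. V j \<notin> span B}. j \<notin> R} h\<^sub>2 = 0"
  proof -
    have "{j \<in> {j \<in> ?K. V j \<notin> span B}. j \<notin> R} = {j \<in> {j \<in> J. V j \<notin> span B} - R. h\<^sub>1 (V j) = 0}"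
      by auto
    then show ?thesis using balanced_modD[OF assms(3) h] by simp
  qed
  moreover have "{j \<in> {j \<in> ?K. V j \<notin> span B}. j \<in> R} = {j \<in> R. h\<^sub>1 (V j) = 0}"
    using assms(2) by auto
  ultimately show ?thesis
    using discrepancy_split[OF fin(1), of V h\<^sub>2 "\<lambda>j. V j \<in> span B"]
      discrepancy_split[OF fin(2), of V h\<^sub>2 "\<lambda>j. j \<in> R"]
    by simp
qed

section \<open>Unbalanced flags\<close>

definition unbalanced_flag :: "('i \<Rightarrow> 'a::euclidean_space) \<Rightarrow> 'i set \<Rightarrow> nat \<Rightarrow> bool" where
  "unbalanced_flag V J d \<longleftrightarrow> (\<exists>(h\<^sub>1::'a \<Rightarrow> real) (h\<^sub>2::'a \<Rightarrow> real). linear h\<^sub>1 \<and> linear h\<^sub>2 \<and>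
      d \<le> dim (V ` {j \<in> J. h\<^sub>1 (V j) = 0 \<and> h\<^sub>2 (V j) = 0}) \<and> discrepancy V {j \<in> J. h\<^sub>1 (V j) = 0} h\<^sub>2 \<noteq> 0)"

text \<open>The pair \<open>a, b\<close> plays the role of an ordinary line: the plane \<open>span (B \<union> {V a, V b})\<close> meets
  the residue \<open>R\<close> only in the hyperplane \<open>span (B \<union> {V a})\<close> and in vectors pointing like \<open>V b\<close>
  modulo \<open>B\<close>. Then \<open>h\<^sub>2\<close> has constant sign on the residue in the face \<open>h\<^sub>1 = 0\<close>, off its
  zero set.\<close>

lemma unbalanced_flag_of_ordinary_pair:
  fixes V :: "'i \<Rightarrow> 'a::euclidean_space"
  assumes "finite J" "B \<subseteq> V ` J" "independent B"
    and R: "R \<subseteq> {j \<in> J. V j \<notin> span B}" "balanced_mod V B ({j \<in> J. V j \<notin> span B} - R)"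
    and ab: "a \<in> J" "b \<in> R" "V a \<notin> span B" "V b \<notin> span (insert (V a) B)"
    and ordinary: "\<And>x. x \<in> R \<Longrightarrow> V x \<in> span (insert (V a) (insert (V b) B)) \<Longrightarrow>
      V x \<in> span (insert (V a) B) \<or> (\<exists>\<beta>>0. V x - \<beta> *\<^sub>R V b \<in> span B)"
  shows "unbalanced_flag V J (card B + 1)"
proof -
  let ?B\<^sub>1 = "insert (V a) (insert (V b) B)" and ?B\<^sub>2 = "insert (V a) B"
  obtain h\<^sub>1 :: "'a \<Rightarrow> real" where h\<^sub>1: "linear h\<^sub>1" "\<And>x. x \<in> span ?B\<^sub>1 \<Longrightarrow> h\<^sub>1 x = 0"
      "\<And>j. j \<in> J \<Longrightarrow> h\<^sub>1 (V j) = 0 \<longleftrightarrow> V j \<in> span ?B\<^sub>1"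
    using exists_functional_zero_set[OF assms(1), of "?B\<^sub>1" V] by metis
  obtain h\<^sub>2 :: "'a \<Rightarrow> real" where h\<^sub>2: "linear h\<^sub>2" "\<And>x. x \<in> span ?B\<^sub>2 \<Longrightarrow> h\<^sub>2 x = 0"
      "\<And>j. j \<in> J \<Longrightarrow> h\<^sub>2 (V j) = 0 \<longleftrightarrow> V j \<in> span ?B\<^sub>2"
    using exists_functional_zero_set[OF assms(1), of "?B\<^sub>2" V] by metis
  have span_B: "span B \<subseteq> span ?B\<^sub>2" "span ?B\<^sub>2 \<subseteq> span ?B\<^sub>1" by (rule span_mono, blast)+
  have "?B\<^sub>2 \<subseteq> V ` {j \<in> J. h\<^sub>1 (V j) = 0 \<and> h\<^sub>2 (V j) = 0}"
  proof
    fix v assume v: "v \<in> ?B\<^sub>2"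
    then obtain j where j: "j \<in> J" "v = V j" using assms(2) ab(1) by blast
    have "V j \<in> span ?B\<^sub>2" using v j(2) by (simp add: span_base)
    then show "v \<in> V ` {j \<in> J. h\<^sub>1 (V j) = 0 \<and> h\<^sub>2 (V j) = 0}"
      using j h\<^sub>1(3) h\<^sub>2(3) span_B(2) by blast
  qed
  then have rank: "card B + 1 \<le> dim (V ` {j \<in> J. h\<^sub>1 (V j) = 0 \<and> h\<^sub>2 (V j) = 0})"
    by (rule card_insert_le_dim[OF assms(3) ab(3)])
  define M where "M = {j \<in> {j \<in> R. h\<^sub>1 (V j) = 0}. h\<^sub>2 (V j) \<noteq> 0}"
  have "R \<subseteq> J" using R(1) by auto
  then have "finite R" using assms(1) finite_subset by blast
  have "discrepancy V {j \<in> J. h\<^sub>1 (V j) = 0} h\<^sub>2 = discrepancy V {j \<in> R. h\<^sub>1 (V j) = 0} h\<^sub>2"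
  proof (rule discrepancy_zero_set_eq_residue[OF assms(1) R h\<^sub>1(1) h\<^sub>2(1)])
    have "span B \<subseteq> span ?B\<^sub>1" using span_B by blast
    then show "\<forall>b\<in>B. h\<^sub>1 b = 0" "\<forall>b\<in>B. h\<^sub>2 b = 0"
      using h\<^sub>1(2) h\<^sub>2(2) span_B(1) span_base by blast+
  qed
  also have "\<dots> = discrepancy V M h\<^sub>2"
    unfolding M_def using \<open>finite R\<close> by (intro discrepancy_restrict_nonzero) simp
  also have "\<dots> \<noteq> 0"
  proof (rule discrepancy_nonzero_if_same_sign)
    show "finite M" using \<open>finite R\<close> by (simp add: M_def)
    show "b \<in> M" using ab \<open>R \<subseteq> J\<close> h\<^sub>1(3) h\<^sub>2(3) by (auto simp: M_def span_base)
    fix j assume j: "j \<in> M"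
    then have "V j \<in> span ?B\<^sub>1" "V j \<notin> span ?B\<^sub>2" using h\<^sub>1(3) h\<^sub>2(2) \<open>R \<subseteq> J\<close> by (auto simp: M_def)
    then obtain \<beta> where "\<beta> > 0" "V j - \<beta> *\<^sub>R V b \<in> span B" using ordinary j by (auto simp: M_def)
    then have "h\<^sub>2 (V j - \<beta> *\<^sub>R V b) = 0" using h\<^sub>2(2) span_B(1) by blast
    then have "h\<^sub>2 (V j) = \<beta> * h\<^sub>2 (V b)" using h\<^sub>2(1) by (simp add: linear_diff linear_scale)
    moreover have "h\<^sub>2 (V j) \<noteq> 0" using j by (simp add: M_def)
    ultimately have "h\<^sub>2 (V b) * h\<^sub>2 (V j) = \<beta> * (h\<^sub>2 (V b))\<^sup>2" "h\<^sub>2 (V b) \<noteq> 0"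
      by (simp_all add: power2_eq_square)
    then show "0 < h\<^sub>2 (V b) * h\<^sub>2 (V j)" using \<open>\<beta> > 0\<close> by simp
  qed
  finally show ?thesis using rank h\<^sub>1(1) h\<^sub>2(1) unfolding unbalanced_flag_def by blast
qed

lemma ordinary_pair_of_vector_outside:
  fixes V :: "'i \<Rightarrow> 'a::euclidean_space"
  assumes "no_opposites_mod V B R" "\<And>x. x \<in> R \<Longrightarrow> V x \<notin> span B" "y \<in> R"
    and "V u \<notin> span (B \<union> V ` R)"
  shows "V y \<notin> span (insert (V u) B)"
    and "\<And>x. x \<in> R \<Longrightarrow> V x \<in> span (insert (V u) (insert (V y) B)) \<Longrightarrow> \<exists>\<beta>>0. V x - \<beta> *\<^sub>R V y \<in> span B"
proof -
  let ?S = "span (B \<union> V ` R)"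
  have no_u: "k = 0" if "w \<in> ?S" "w - k *\<^sub>R V u \<in> ?S" for w k
  proof (rule ccontr)
    assume "k \<noteq> 0"
    have "k *\<^sub>R V u \<in> ?S" using span_diff[OF that] by simp
    then have "(1 / k) *\<^sub>R (k *\<^sub>R V u) \<in> ?S" by (rule span_mul)
    then show False using assms(4) \<open>k \<noteq> 0\<close> by simp
  qed
  have "span B \<subseteq> ?S" by (rule span_mono) blast
  moreover have "span (insert (V y) B) \<subseteq> ?S" using assms(3) by (intro span_mono) blast
  moreover have inS: "V x \<in> ?S" if "x \<in> R" for x using that by (simp add: span_base)
  ultimately show "V y \<notin> span (insert (V u) B)"
    using no_u[OF inS[OF assms(3)]] assms(2,3) span_breakdown_eq[of "V y" "V u" B]
    by (metis (no_types, lifting) diff_zero scale_zero_left subsetD)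
  fix x assume x: "x \<in> R" "V x \<in> span (insert (V u) (insert (V y) B))"
  then obtain k where k: "V x - k *\<^sub>R V u \<in> span (insert (V y) B)" using span_breakdown_eq by blast
  then have "k = 0" using no_u[OF inS[OF x(1)]] \<open>span (insert (V y) B) \<subseteq> ?S\<close> by blast
  then have "V x \<in> span (insert (V y) B)" using k by simp
  then obtain \<beta> where "V x - \<beta> *\<^sub>R V y \<in> span B" using span_breakdown_eq by blast
  moreover from this have "\<beta> > 0"
    using pos_coeff_if_no_opposites_mod[OF assms(1) x(1) assms(3)] assms(2) x(1) assms(3) by blast
  ultimately show "\<exists>\<beta>>0. V x - \<beta> *\<^sub>R V y \<in> span B" by blast
qed

text \<open>Sylvester--Gallai applied to the residue projected along \<open>span B\<close>.\<close>

lemma ordinary_pair_of_residue: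
  fixes V :: "'i \<Rightarrow> 'a::euclidean_space"
  assumes "finite R" "no_opposites_mod V B R" "\<And>x. x \<in> R \<Longrightarrow> V x \<notin> span B"
    and noncoplanar: "\<And>c d. \<not> V ` R \<subseteq> span (B \<union> {c, d})"
  obtains a b where "a \<in> R" "b \<in> R" "V b \<notin> span (insert (V a) B)"
    "\<And>x. x \<in> R \<Longrightarrow> V x \<in> span (insert (V a) (insert (V b) B)) \<Longrightarrow>
       V x \<in> span (insert (V a) B) \<or> (\<exists>\<beta>>0. V x - \<beta> *\<^sub>R V b \<in> span B)"
proof -
  obtain p :: "'a \<Rightarrow> 'a" where p: "linear p" "\<And>x. x - p x \<in> span B" "\<And>x. p x = 0 \<longleftrightarrow> x \<in> span B"
    using exists_projection_kernel_span[of B] by blast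
  have p_eq: "x - k *\<^sub>R y \<in> span B \<longleftrightarrow> p x = k *\<^sub>R p y" for x y k
    using p(3)[of "x - k *\<^sub>R y"] p(1) by (simp add: linear_diff linear_scale)
  have "\<not> p ` V ` R \<subseteq> span {c, d}" for c d
  proof
    assume "p ` V ` R \<subseteq> span {c, d}"
    from subset_span_Un_if_image_subset[OF p(2) this] show False using noncoplanar by blast
  qed
  moreover have "finite (p ` V ` R)" "0 \<notin> p ` V ` R" using assms(1,3) p(3) by auto
  ultimately obtain a' b' where ab': "a' \<in> p ` V ` R" "b' \<in> p ` V ` R" "b' \<notin> span {a'}"
      and ordinary': "\<And>c. c \<in> p ` V ` R \<Longrightarrow> c \<in> span {a', b'} \<Longrightarrow> c \<in> span {a'} \<or> c \<in> span {b'}"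
    using sylvester_gallai_vectors[of "p ` V ` R"] by blast
  then obtain a b where ab: "a \<in> R" "b \<in> R" "a' = p (V a)" "b' = p (V b)" by blast
  have "V b \<notin> span (insert (V a) B)"
    using ab'(3) unfolding ab span_breakdown_eq p_eq by (auto simp: span_singleton)
  moreover have "V x \<in> span (insert (V a) B) \<or> (\<exists>\<beta>>0. V x - \<beta> *\<^sub>R V b \<in> span B)"
    if x: "x \<in> R" "V x \<in> span (insert (V a) (insert (V b) B))" for x
  proof -
    obtain k where "V x - k *\<^sub>R V a \<in> span (insert (V b) B)" using x(2) span_breakdown_eq by blast
    then obtain l where "V x - k *\<^sub>R V a - l *\<^sub>R V b \<in> span B" using span_breakdown_eq by blast
    then have "p (V x - k *\<^sub>R V a - l *\<^sub>R V b) = 0" using p(3) by blast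
    then have "p (V x) = k *\<^sub>R a' + l *\<^sub>R b'" using p(1) ab by (simp add: linear_diff linear_scale diff_eq_eq)
    then have "p (V x) \<in> span {a', b'}" by (simp add: span_add span_mul span_base)
    moreover have "p (V x) \<in> p ` V ` R" using x(1) by simp
    ultimately have "p (V x) \<in> span {a'} \<or> p (V x) \<in> span {b'}" using ordinary' by blast
    then consider m where "p (V x) = m *\<^sub>R a'" | m where "p (V x) = m *\<^sub>R b'"
      by (auto simp: span_singleton)
    then show ?thesis
    proof cases
      case (1 m)
      then show ?thesis using p_eq[of "V x" m "V a"] ab span_breakdown_eq by blast
    next
      case (2 m)
      then have "V x - m *\<^sub>R V b \<in> span B" using p_eq ab by simp
      moreover from this have "m > 0"
        using pos_coeff_if_no_opposites_mod[OF assms(2) x(1) ab(2)] assms(3) x(1) ab(2) by blast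
      ultimately show ?thesis by blast
    qed
  qed
  ultimately show ?thesis using that ab(1,2) by blast
qed

lemma unbalanced_flag_of_unbalanced_functional:
  fixes V :: "'i \<Rightarrow> 'a::euclidean_space"
  assumes "finite J" "B \<subseteq> V ` J" "independent B" "dim (V ` J) = card B + 3"
    and f: "linear f" "\<forall>b\<in>B. f b = 0" "discrepancy V J f \<noteq> 0"
  shows "unbalanced_flag V J (card B + 1)"
proof -
  let ?J' = "{j \<in> J. V j \<notin> span B}"
  obtain R where R: "R \<subseteq> ?J'" "no_opposites_mod V B R" "balanced_mod V B (?J' - R)"
    using exists_no_opposites_balanced_rest[of ?J' V B] assms(1) by auto
  have "finite ?J'" using assms(1) by simp
  then have "finite R" using R(1) finite_subset by blast
  have outside: "\<And>x. x \<in> R \<Longrightarrow> V x \<notin> span B" using R(1) by auto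
  have "linear (\<lambda>x::'a. 0::real)" by (simp add: linear_zero)
  from discrepancy_zero_set_eq_residue[OF assms(1) R(1,3) this f(1)] f(2)
  have "discrepancy V J f = discrepancy V R f" by simp
  then obtain y where "y \<in> R" using f(3) by fastforce
  show ?thesis
  proof (cases "\<exists>u\<in>J. V u \<notin> span (B \<union> V ` R)")
    case True
    then obtain u where u: "u \<in> J" "V u \<notin> span (B \<union> V ` R)" by blast
    have "V u \<notin> span B" using u(2) span_mono[of B "B \<union> V ` R"] by blast
    with ordinary_pair_of_vector_outside[OF R(2) outside \<open>y \<in> R\<close> u(2)] show ?thesis
      using unbalanced_flag_of_ordinary_pair[OF assms(1-3) R(1,3) u(1) \<open>y \<in> R\<close>] by blast
  next
    case False
    then have "V ` J \<subseteq> span (B \<union> V ` R)" by blast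
    then have "\<not> B \<union> V ` R \<subseteq> span (B \<union> {c, d})" for c d
      using not_subset_span_Un_pair[OF finiteI_independent[OF assms(3)] assms(4)] by blast
    then have "\<not> V ` R \<subseteq> span (B \<union> {c, d})" for c d
      using span_superset[of "B \<union> {c, d}"] by blast
    then obtain a b where "a \<in> R" "b \<in> R" "V b \<notin> span (insert (V a) B)"
      "\<And>x. x \<in> R \<Longrightarrow> V x \<in> span (insert (V a) (insert (V b) B)) \<Longrightarrow>
         V x \<in> span (insert (V a) B) \<or> (\<exists>\<beta>>0. V x - \<beta> *\<^sub>R V b \<in> span B)"
      using ordinary_pair_of_residue[OF \<open>finite R\<close> R(2) outside] by blast
    then show ?thesis
      using unbalanced_flag_of_ordinary_pair[OF assms(1-3) R(1,3)] R(1) outside by blast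
  qed
qed

definition antipodal_free :: "('i \<Rightarrow> 'a::real_vector) \<Rightarrow> 'i set \<Rightarrow> bool" where
  "antipodal_free V J \<longleftrightarrow> (\<forall>j\<in>J. V j \<noteq> 0) \<and> no_opposites_mod V {} J"

lemma antipodal_free_subset:
  assumes "antipodal_free V J" "K \<subseteq> J"
  shows "antipodal_free V K"
  using assms by (auto simp: antipodal_free_def no_opposites_mod_def subset_iff)

lemma inner_pos_if_parallel:
  fixes V :: "'i \<Rightarrow> 'a::euclidean_space"
  assumes "antipodal_free V J" "u \<in> J" "j \<in> J" "V j \<in> span {V u}"
  shows "V u \<bullet> V j > 0"
proof -
  obtain k where k: "V j = k *\<^sub>R V u" using assms(4) by (auto simp: span_singleton)
  have nz: "V j \<noteq> 0" "V u \<noteq> 0" using assms(1-3) by (auto simp: antipodal_free_def)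
  have "V j - k *\<^sub>R V u \<in> span {}" using k by simp
  then have "k > 0"
    using pos_coeff_if_no_opposites_mod[of V "{}" J j u k] assms(1-3) nz
    unfolding antipodal_free_def by simp
  then show ?thesis using k nz(2) by simp
qed

lemma unbalanced_flag_base:
  fixes V :: "'i \<Rightarrow> 'a::euclidean_space"
  assumes "finite J" "antipodal_free V J" "u \<in> J"
  shows "unbalanced_flag V J 0"
proof -
  obtain h :: "'a \<Rightarrow> real" where h: "linear h" "\<And>j. j \<in> J \<Longrightarrow> h (V j) = 0 \<longleftrightarrow> V j \<in> span {V u}"
    using exists_functional_zero_set[OF assms(1), of "{V u}" V] by metis
  have "discrepancy V {j \<in> J. h (V j) = 0} (\<lambda>x. V u \<bullet> x) \<noteq> 0"
  proof (rule discrepancy_nonzero_if_same_sign[where c = 1])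
    show "finite {j \<in> J. h (V j) = 0}" "u \<in> {j \<in> J. h (V j) = 0}"
      using assms(1,3) h(2) by (simp_all add: span_base)
    show "0 < 1 * (V u \<bullet> V j)" if "j \<in> {j \<in> J. h (V j) = 0}" for j
    proof -
      have "j \<in> J" "V j \<in> span {V u}" using that h(2) by auto
      then show ?thesis using inner_pos_if_parallel[OF assms(2,3)] by simp
    qed
  qed
  then show ?thesis
    using h(1) bounded_linear.linear[OF bounded_linear_inner_right] unfolding unbalanced_flag_def by blast
qed

lemma exists_hyperplane_section:
  fixes V :: "'i \<Rightarrow> 'a::euclidean_space"
  assumes "finite J" "dim (V ` J) = Suc k"
  obtains h :: "'a \<Rightarrow> real" where "linear h" "dim (V ` {j \<in> J. h (V j) = 0}) = k"
proof -
  obtain C where C: "C \<subseteq> V ` J" "independent C" "V ` J \<subseteq> span C" "card C = Suc k"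
    using basis_exists assms(2) by metis
  then obtain c where "c \<in> C" by fastforce
  define C' where "C' = C - {c}"
  have "card C' = k" "independent C'"
    using C(2,4) \<open>c \<in> C\<close> by (simp_all add: C'_def independent_mono)
  obtain h :: "'a \<Rightarrow> real" where h: "linear h" "\<And>j. j \<in> J \<Longrightarrow> h (V j) = 0 \<longleftrightarrow> V j \<in> span C'"
    using exists_functional_zero_set[OF assms(1), of C' V] by metis
  have "C' \<subseteq> V ` {j \<in> J. h (V j) = 0}"
  proof
    fix v assume v: "v \<in> C'"
    then obtain j where j: "j \<in> J" "v = V j" using C(1) by (auto simp: C'_def)
    then have "h (V j) = 0" using v h(2) by (simp add: span_base)
    then show "v \<in> V ` {j \<in> J. h (V j) = 0}" using j by blast
  qed
  then have "k \<le> dim (V ` {j \<in> J. h (V j) = 0})"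
    using independent_card_le_dim \<open>card C' = k\<close> \<open>independent C'\<close> by metis
  moreover have "dim (V ` {j \<in> J. h (V j) = 0}) \<le> k"
  proof -
    have "V ` {j \<in> J. h (V j) = 0} \<subseteq> span C'" using h(2) by auto
    then have "dim (V ` {j \<in> J. h (V j) = 0}) \<le> dim C'" by (rule dim_mono)
    then show ?thesis using \<open>independent C'\<close> \<open>card C' = k\<close> by (simp add: dim_eq_card_independent)
  qed
  ultimately show ?thesis using that h(1) by simp
qed

text \<open>Two lexicographic perturbations, of \<open>h\<^sub>0\<close> and of \<open>-h\<^sub>0\<close>, whose discrepancies add up to
  twice the nonzero discrepancy of \<open>h\<^sub>2\<close> on the zero set of \<open>h\<^sub>0\<close> and \<open>h\<^sub>1\<close>.\<close>

lemma unbalanced_combination: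
  fixes V :: "'i \<Rightarrow> 'a::euclidean_space" and h\<^sub>0 h\<^sub>1 h\<^sub>2 :: "'a \<Rightarrow> real"
  assumes "finite J" "discrepancy V {j \<in> J. h\<^sub>0 (V j) = 0 \<and> h\<^sub>1 (V j) = 0} h\<^sub>2 \<noteq> 0"
  shows "\<exists>a b c. discrepancy V J (\<lambda>x. a * h\<^sub>0 x + b * h\<^sub>1 x + c * h\<^sub>2 x) \<noteq> 0"
proof -
  define J\<^sub>0 where "J\<^sub>0 = {j \<in> J. h\<^sub>0 (V j) = 0}"
  define g where "g = discrepancy V {j \<in> J. h\<^sub>0 (V j) = 0 \<and> h\<^sub>1 (V j) = 0} h\<^sub>2"
  have "finite J\<^sub>0" using assms(1) by (simp add: J\<^sub>0_def)
  have zero_sets: "{j \<in> J\<^sub>0. h\<^sub>1 (V j) = 0} = {j \<in> J. h\<^sub>0 (V j) = 0 \<and> h\<^sub>1 (V j) = 0}"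
    "{j \<in> J\<^sub>0. - h\<^sub>1 (V j) = 0} = {j \<in> J. h\<^sub>0 (V j) = 0 \<and> h\<^sub>1 (V j) = 0}"
    "{j \<in> J. - h\<^sub>0 (V j) = 0} = J\<^sub>0"
    by (auto simp: J\<^sub>0_def)
  obtain e\<^sub>2 where "e\<^sub>2 > 0" "discrepancy V J\<^sub>0 (\<lambda>x. h\<^sub>1 x + e\<^sub>2 * h\<^sub>2 x)
      = discrepancy V J\<^sub>0 h\<^sub>1 + discrepancy V {j \<in> J\<^sub>0. h\<^sub>1 (V j) = 0} h\<^sub>2"
    by (rule discrepancy_perturb[OF \<open>finite J\<^sub>0\<close>, of V h\<^sub>1 h\<^sub>2])
  then have e\<^sub>2: "discrepancy V J\<^sub>0 (\<lambda>x. h\<^sub>1 x + e\<^sub>2 * h\<^sub>2 x) = discrepancy V J\<^sub>0 h\<^sub>1 + g"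
    using zero_sets(1) g_def by simp
  obtain e\<^sub>1 where "e\<^sub>1 > 0" and e\<^sub>1: "discrepancy V J (\<lambda>x. h\<^sub>0 x + e\<^sub>1 * (h\<^sub>1 x + e\<^sub>2 * h\<^sub>2 x))
      = discrepancy V J h\<^sub>0 + discrepancy V J\<^sub>0 (\<lambda>x. h\<^sub>1 x + e\<^sub>2 * h\<^sub>2 x)"
    unfolding J\<^sub>0_def by (rule discrepancy_perturb[OF assms(1), of V h\<^sub>0 "\<lambda>x. h\<^sub>1 x + e\<^sub>2 * h\<^sub>2 x"])
  obtain e\<^sub>2' where "e\<^sub>2' > 0" "discrepancy V J\<^sub>0 (\<lambda>x. - h\<^sub>1 x + e\<^sub>2' * h\<^sub>2 x)
      = discrepancy V J\<^sub>0 (\<lambda>x. - h\<^sub>1 x) + discrepancy V {j \<in> J\<^sub>0. - h\<^sub>1 (V j) = 0} h\<^sub>2"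
    by (rule discrepancy_perturb[OF \<open>finite J\<^sub>0\<close>, of V "\<lambda>x. - h\<^sub>1 x" h\<^sub>2])
  then have e\<^sub>2': "discrepancy V J\<^sub>0 (\<lambda>x. - h\<^sub>1 x + e\<^sub>2' * h\<^sub>2 x) = - discrepancy V J\<^sub>0 h\<^sub>1 + g"
    using zero_sets(2) g_def by (simp add: discrepancy_uminus)
  obtain e\<^sub>1' where "e\<^sub>1' > 0" "discrepancy V J (\<lambda>x. - h\<^sub>0 x + e\<^sub>1' * (- h\<^sub>1 x + e\<^sub>2' * h\<^sub>2 x))
      = discrepancy V J (\<lambda>x. - h\<^sub>0 x) + discrepancy V {j \<in> J. - h\<^sub>0 (V j) = 0} (\<lambda>x. - h\<^sub>1 x + e\<^sub>2' * h\<^sub>2 x)"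
    by (rule discrepancy_perturb[OF assms(1), of V "\<lambda>x. - h\<^sub>0 x" "\<lambda>x. - h\<^sub>1 x + e\<^sub>2' * h\<^sub>2 x"])
  then have e\<^sub>1': "discrepancy V J (\<lambda>x. - h\<^sub>0 x + e\<^sub>1' * (- h\<^sub>1 x + e\<^sub>2' * h\<^sub>2 x))
      = - discrepancy V J h\<^sub>0 + discrepancy V J\<^sub>0 (\<lambda>x. - h\<^sub>1 x + e\<^sub>2' * h\<^sub>2 x)"
    using zero_sets(3) by (simp add: discrepancy_uminus)
  let ?f\<^sub>1 = "\<lambda>x. 1 * h\<^sub>0 x + e\<^sub>1 * h\<^sub>1 x + (e\<^sub>1 * e\<^sub>2) * h\<^sub>2 x"
  let ?f\<^sub>2 = "\<lambda>x. (- 1) * h\<^sub>0 x + (- e\<^sub>1') * h\<^sub>1 x + (e\<^sub>1' * e\<^sub>2') * h\<^sub>2 x"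
  have "?f\<^sub>1 = (\<lambda>x. h\<^sub>0 x + e\<^sub>1 * (h\<^sub>1 x + e\<^sub>2 * h\<^sub>2 x))"
    and "?f\<^sub>2 = (\<lambda>x. - h\<^sub>0 x + e\<^sub>1' * (- h\<^sub>1 x + e\<^sub>2' * h\<^sub>2 x))"
    by (rule ext, simp add: algebra_simps)+
  then have "discrepancy V J ?f\<^sub>1 + discrepancy V J ?f\<^sub>2 = 2 * g"
    using e\<^sub>1 e\<^sub>2 e\<^sub>1' e\<^sub>2' by simp
  moreover have "g \<noteq> 0" using assms(2) g_def by simp
  ultimately have "discrepancy V J ?f\<^sub>1 \<noteq> 0 \<or> discrepancy V J ?f\<^sub>2 \<noteq> 0" by linarith
  then show ?thesis by blast
qed

theorem unbalanced_flag_if_antipodal_free: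
  fixes V :: "'i \<Rightarrow> 'a::euclidean_space"
  assumes "finite J" "antipodal_free V J" "J \<noteq> {}"
  shows "unbalanced_flag V J (dim (V ` J) - 2)"
  using assms
proof (induction "dim (V ` J)" arbitrary: J rule: less_induct)
  case less
  show ?case
  proof (cases "dim (V ` J) \<le> 2")
    case True
    then show ?thesis using unbalanced_flag_base[OF less.prems(1,2)] less.prems(3) by auto
  next
    case False
    define k where "k = dim (V ` J) - 1"
    have k: "dim (V ` J) = Suc k" "k \<ge> 2" using False by (auto simp: k_def)
    obtain h\<^sub>0 :: "'a \<Rightarrow> real" where h\<^sub>0: "linear h\<^sub>0" "dim (V ` {j \<in> J. h\<^sub>0 (V j) = 0}) = k"
      using exists_hyperplane_section[OF less.prems(1) k(1)] by metis
    let ?J\<^sub>0 = "{j \<in> J. h\<^sub>0 (V j) = 0}"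
    have "?J\<^sub>0 \<noteq> {}"
    proof
      assume empty: "?J\<^sub>0 = {}"
      show False using h\<^sub>0(2) k(2) unfolding empty by simp
    qed
    moreover have "antipodal_free V ?J\<^sub>0" using less.prems(2) by (rule antipodal_free_subset) auto
    moreover have "dim (V ` ?J\<^sub>0) < dim (V ` J)" using h\<^sub>0(2) k(1) by simp
    ultimately have "unbalanced_flag V ?J\<^sub>0 (k - 2)"
      using less.hyps[of ?J\<^sub>0] less.prems(1) h\<^sub>0(2) by simp
    then obtain h\<^sub>1 h\<^sub>2 :: "'a \<Rightarrow> real" where h: "linear h\<^sub>1" "linear h\<^sub>2"
        "k - 2 \<le> dim (V ` {j \<in> ?J\<^sub>0. h\<^sub>1 (V j) = 0 \<and> h\<^sub>2 (V j) = 0})"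
        "discrepancy V {j \<in> ?J\<^sub>0. h\<^sub>1 (V j) = 0} h\<^sub>2 \<noteq> 0"
      unfolding unbalanced_flag_def by blast
    let ?K = "{j \<in> ?J\<^sub>0. h\<^sub>1 (V j) = 0 \<and> h\<^sub>2 (V j) = 0}"
    obtain B where B: "B \<subseteq> V ` ?K" "independent B" "card B = k - 2"
      using exists_independent_subset_card[OF h(3)] by blast
    then have "B \<subseteq> V ` J" "\<forall>b\<in>B. h\<^sub>0 b = 0 \<and> h\<^sub>1 b = 0 \<and> h\<^sub>2 b = 0" by auto
    have "{j \<in> ?J\<^sub>0. h\<^sub>1 (V j) = 0} = {j \<in> J. h\<^sub>0 (V j) = 0 \<and> h\<^sub>1 (V j) = 0}" by auto
    then obtain a b c where "discrepancy V J (\<lambda>x. a * h\<^sub>0 x + b * h\<^sub>1 x + c * h\<^sub>2 x) \<noteq> 0"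
      using unbalanced_combination[OF less.prems(1), of V h\<^sub>0 h\<^sub>1 h\<^sub>2] h(4) by auto
    moreover have "linear (\<lambda>x. a * h\<^sub>0 x + b * h\<^sub>1 x + c * h\<^sub>2 x)"
      using linear_add_mult[OF linear_add_mult[OF linear_compose_scale_right[OF h\<^sub>0(1)] h(1)] h(2)]
      by simp
    moreover have "dim (V ` J) = card B + 3" using k B(3) by simp
    ultimately have "unbalanced_flag V J (card B + 1)"
      using unbalanced_flag_of_unbalanced_functional[OF less.prems(1) \<open>B \<subseteq> V ` J\<close> B(2)]
        \<open>\<forall>b\<in>B. h\<^sub>0 b = 0 \<and> h\<^sub>1 b = 0 \<and> h\<^sub>2 b = 0\<close> by auto
    moreover have "card B + 1 = dim (V ` J) - 2" using k B(3) by simp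
    ultimately show ?thesis by simp
  qed
qed

section \<open>The rank bound\<close>

lemma DD_codim2_face_less:
  fixes V :: "'i \<Rightarrow> 'a::euclidean_space" and h\<^sub>1 h\<^sub>2 :: "'a \<Rightarrow> real"
  assumes "finite J" "linear h\<^sub>1" "linear h\<^sub>2" "discrepancy V {j \<in> J. h\<^sub>1 (V j) = 0} h\<^sub>2 \<noteq> 0"
  shows "DD V {j \<in> J. h\<^sub>1 (V j) = 0 \<and> h\<^sub>2 (V j) = 0} < DD V J"
proof -
  let ?J\<^sub>1 = "{j \<in> J. h\<^sub>1 (V j) = 0}"
  have "{j \<in> ?J\<^sub>1. h\<^sub>2 (V j) = 0} = {j \<in> J. h\<^sub>1 (V j) = 0 \<and> h\<^sub>2 (V j) = 0}" by auto
  then have "1 + DD V {j \<in> J. h\<^sub>1 (V j) = 0 \<and> h\<^sub>2 (V j) = 0} \<le> DD V ?J\<^sub>1"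
    using discrepancy_plus_DD_zero_set_le_DD[of ?J\<^sub>1 h\<^sub>2 V] assms by simp
  also have "\<dots> \<le> DD V J"
    using discrepancy_plus_DD_zero_set_le_DD[OF assms(1,2), of V] by simp
  finally show ?thesis by simp
qed

text \<open>Induction on the rank: the codimension-2 face of an unbalanced flag has smaller rank, at
  least \<open>rank - 2\<close>, and strictly smaller covector discrepancy.\<close>

theorem rank_le_2_DD_if_antipodal_free:
  fixes V :: "'i \<Rightarrow> 'a::euclidean_space"
  assumes "finite J" "antipodal_free V J"
  shows "dim (V ` J) \<le> 2 * DD V J"
  using assms
proof (induction "dim (V ` J)" arbitrary: J rule: less_induct)
  case less
  show ?case
  proof (cases "J = {}")
    case False
    then obtain h\<^sub>1 h\<^sub>2 :: "'a \<Rightarrow> real" where h: "linear h\<^sub>1" "linear h\<^sub>2"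
        "dim (V ` J) - 2 \<le> dim (V ` {j \<in> J. h\<^sub>1 (V j) = 0 \<and> h\<^sub>2 (V j) = 0})"
        "discrepancy V {j \<in> J. h\<^sub>1 (V j) = 0} h\<^sub>2 \<noteq> 0"
      using unbalanced_flag_if_antipodal_free[OF less.prems] unfolding unbalanced_flag_def by blast
    let ?J\<^sub>2 = "{j \<in> J. h\<^sub>1 (V j) = 0 \<and> h\<^sub>2 (V j) = 0}"
    obtain j where "j \<in> J" "h\<^sub>1 (V j) = 0" "h\<^sub>2 (V j) \<noteq> 0"
      using h(4) discrepancy_eq_0_if_vanishing[of "{j \<in> J. h\<^sub>1 (V j) = 0}" h\<^sub>2 V] by blast
    then have "dim (V ` ?J\<^sub>2) < dim (V ` J)"
      by (intro dim_image_less_if_not_vanishing[OF _ h(2)]) auto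
    moreover have "finite ?J\<^sub>2" using less.prems(1) by simp
    moreover have "antipodal_free V ?J\<^sub>2" using less.prems(2) by (rule antipodal_free_subset) auto
    ultimately have "dim (V ` ?J\<^sub>2) \<le> 2 * DD V ?J\<^sub>2" using less.hyps by blast
    moreover have "DD V ?J\<^sub>2 < DD V J" using DD_codim2_face_less[OF less.prems(1) h(1,2,4)] .
    ultimately show ?thesis using h(3) by linarith
  qed simp
qed

lemma exists_antipodal_free_core:
  fixes V :: "'i \<Rightarrow> 'a::euclidean_space"
  assumes "finite I"
  obtains R where "R \<subseteq> I" "antipodal_free V R" "\<And>f. linear f \<Longrightarrow> discrepancy V (I - R) f = 0"
proof -
  let ?I' = "{i \<in> I. V i \<noteq> 0}"
  obtain R where R: "R \<subseteq> ?I'" "no_opposites_mod V {} R" "balanced_mod V {} (?I' - R)"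
    using exists_no_opposites_balanced_rest[of ?I' V "{}"] assms by auto
  have "discrepancy V (I - R) f = 0" if "linear f" for f :: "'a \<Rightarrow> real"
  proof -
    have "finite (I - R)" using assms by simp
    then have "discrepancy V (I - R) f
        = discrepancy V {i \<in> I - R. V i = 0} f + discrepancy V {i \<in> I - R. V i \<noteq> 0} f"
      by (rule discrepancy_split)
    moreover have "discrepancy V {i \<in> I - R. V i = 0} f = 0"
      using linear_0[OF that] by (intro discrepancy_eq_0_if_vanishing) auto
    moreover have "{i \<in> I - R. V i \<noteq> 0} = ?I' - R" by auto
    ultimately show ?thesis using discrepancy_eq_0_if_balanced_mod[OF R(3) that] by simp
  qed
  moreover have "antipodal_free V R" using R(1,2) by (auto simp: antipodal_free_def)
  ultimately show ?thesis using that R(1) by blast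
qed

theorem mainTheorem4:
  fixes V :: "'i \<Rightarrow> 'a::euclidean_space" and I :: "'i set"
  assumes "finite I"
  shows "\<exists>J \<subseteq> I. rank_conf V J \<le> 2 * DD V I \<and> DD V J = DD V I \<and> DD V (I - J) = 0"
proof -
  obtain R where R: "R \<subseteq> I" "antipodal_free V R" "\<And>f. linear f \<Longrightarrow> discrepancy V (I - R) f = 0"
    using exists_antipodal_free_core[OF assms] by blast
  have "finite R" using R(1) assms finite_subset by blast
  have "DD V (I - R) = 0" using assms R(3) by (intro DD_eq_0_if_balanced) auto
  moreover have "DD V I = DD V R"
  proof (rule DD_cong)
    fix f :: "'a \<Rightarrow> real" assume "linear f"
    have "I = R \<union> (I - R)" using R(1) by auto
    then show "discrepancy V I f = discrepancy V R f"
      using discrepancy_Un_disjoint[of R "I - R" V f] \<open>finite R\<close> assms R(3)[OF \<open>linear f\<close>] by simp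
  qed
  moreover have "rank_conf V R \<le> 2 * DD V R"
    using rank_le_2_DD_if_antipodal_free[OF \<open>finite R\<close> R(2)] by (simp add: rank_conf_def dim_span)
  ultimately show ?thesis using R(1) by (intro exI[of _ R]) simp
qed

end
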